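(* Let $M$ be a $C^\infty$ real hypersurface in $\mathbb{C}^2$ and $p\in M$. If $\gamma\in\Gamma$ is tangent to $M$ at $p$ to infinite order, then $\gamma\in\Gamma^{\rm reg}$.
   Context: A local defining function $r$ for $M$ near $p$ is a real-valued $C^\infty$ function with $M=\{r=0\}$ near $p$ and $\nabla r\ne0$ on $M$. $\operatorname{ord}(h)$ denotes order of vanishing at $0$. $\Gamma$ is the set of germs of nonconstant holomorphic maps $\gamma:(\mathbb{C},0)\to(\mathbb{C}^2,p)$, always taken with a good parametrization (each point of the image corresponds to only one value of $t$). $\Gamma^{\rm reg}=\{\gamma\in\Gamma:\operatorname{ord}(\gamma-p)=1\}$. $\gamma$ is tangent to $M$ at $p$ to infinite order if $(r\circ\gamma)(t)=O(t^N)$ as $t\to0$ for every $N\in\mathbb{N}$. *)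

theory Defs
  imports "HOL-Analysis.Analysis" "HOL-Complex_Analysis.Complex_Analysis" "HOL-Library.Landau_Symbols"
begin

primrec Ck_on :: "nat \<Rightarrow> 'a::real_normed_vector set \<Rightarrow> ('a \<Rightarrow> 'b::real_normed_vector) \<Rightarrow> bool" where
  "Ck_on 0 U f = continuous_on U f"
| "Ck_on (Suc k) U f = ((\<forall>x\<in>U. f differentiable (at x)) \<and>
      (\<forall>v. Ck_on k U (\<lambda>x. frechet_derivative f (at x) v)))"

definition smooth_on :: "'a::real_normed_vector set \<Rightarrow> ('a \<Rightarrow> 'b::real_normed_vector) \<Rightarrow> bool" where
  "smooth_on U f \<longleftrightarrow> open U \<and> (\<forall>k. Ck_on k U f)"

definition local_defining_function ::
  "(complex \<times> complex) set \<Rightarrow> complex \<times> complex \<Rightarrow> (complex \<times> complex) set \<Rightarrow> (complex \<times> complex \<Rightarrow> real) \<Rightarrow> bool" where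
  "local_defining_function M p U r \<longleftrightarrow>
     open U \<and> p \<in> U \<and> smooth_on U r \<and>
     M \<inter> U = {z \<in> U. r z = 0} \<and>
     (\<forall>z\<in>M \<inter> U. frechet_derivative r (at z) \<noteq> (\<lambda>v. 0))"

definition smooth_real_hypersurface :: "(complex \<times> complex) set \<Rightarrow> bool" where
  "smooth_real_hypersurface M \<longleftrightarrow> (\<forall>q\<in>M. \<exists>U r. local_defining_function M q U r)"

definition vanishing_order :: "(complex \<Rightarrow> complex \<times> complex) \<Rightarrow> nat" where
  "vanishing_order h = (LEAST n. (deriv ^^ n) (\<lambda>t. fst (h t)) 0 \<noteq> 0 \<or> (deriv ^^ n) (\<lambda>t. snd (h t)) 0 \<noteq> 0)"

text \<open>Germ in \<Gamma> (with a good parametrization), represented on a disc ball 0 e.\<close>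
definition in_Gamma :: "complex \<times> complex \<Rightarrow> (complex \<Rightarrow> complex \<times> complex) \<Rightarrow> bool" where
  "in_Gamma p \<gamma> \<longleftrightarrow> (\<exists>e>0. (\<lambda>t. fst (\<gamma> t)) holomorphic_on ball 0 e \<and>
       (\<lambda>t. snd (\<gamma> t)) holomorphic_on ball 0 e \<and>
       \<gamma> 0 = p \<and> (\<exists>t\<in>ball 0 e. \<gamma> t \<noteq> p) \<and> inj_on \<gamma> (ball 0 e))"

definition in_Gamma_reg :: "complex \<times> complex \<Rightarrow> (complex \<Rightarrow> complex \<times> complex) \<Rightarrow> bool" where
  "in_Gamma_reg p \<gamma> \<longleftrightarrow> in_Gamma p \<gamma> \<and> vanishing_order (\<lambda>t. \<gamma> t - p) = 1"

definition tangent_infinite_order :: "(complex \<times> complex \<Rightarrow> real) \<Rightarrow> (complex \<Rightarrow> complex \<times> complex) \<Rightarrow> bool" where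
  "tangent_infinite_order r \<gamma> \<longleftrightarrow> (\<forall>N::nat. (\<lambda>t. r (\<gamma> t)) \<in> O[at 0](\<lambda>t. cmod t ^ N))"

end

(*
  Suppose gamma'(0) = 0 and write dr_p = Re l with l(z, w) = a z + b w.  The holomorphic function
  F = m o (gamma - p), where m(z, w) = cnj b z - cnj a w, then has a critical zero at 0, so
  F o sigma = F for a holomorphic sigma with sigma(0) = 0 and sigma(t) ~= t for t ~= 0: unless F
  vanishes identically (then sigma(t) = -t), locally F = k^n with n >= 2 and k biholomorphic, and
  sigma is k conjugated to a rotation by an n-th root of unity.  Hence gamma(t) - gamma(sigma(t)) lies in ker m, the complex line through
  (cnj a, cnj b), on which |l| is sqrt(|a|^2 + |b|^2) times the norm; by injectivity of gamma,
  delta = l o (gamma - gamma o sigma) is holomorphic and nonzero near 0.  Since r is strictly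
  differentiable at p and flat along both gamma and gamma o sigma, |Re delta| <= |delta|/2 + O(|t|^N)
  for every N, which fails along a ray on which the leading term of delta is a positive real.
*)

theory Submission
  imports Defs
begin

lemma norm_Pair_cnj_proportional:
  fixes a b z w :: complex
  assumes "cnj b * z = cnj a * w"
  shows "sqrt ((cmod a)\<^sup>2 + (cmod b)\<^sup>2) * norm (z, w) = cmod (a * z + b * w)"
proof -
  have lagrange: "((cmod a)\<^sup>2 + (cmod b)\<^sup>2) * ((cmod z)\<^sup>2 + (cmod w)\<^sup>2)
      = (cmod (a * z + b * w))\<^sup>2 + (cmod (cnj b * z - cnj a * w))\<^sup>2"
    by (simp only: cmod_power2) (simp add: power2_eq_square algebra_simps)
  have "(sqrt ((cmod a)\<^sup>2 + (cmod b)\<^sup>2) * norm (z, w))\<^sup>2 = (cmod (a * z + b * w))\<^sup>2"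
    using lagrange assms by (simp add: power_mult_distrib norm_Pair)
  then show ?thesis by (simp add: power2_eq_iff_nonneg)
qed

lemma linear_complex_pair_to_real:
  fixes L :: "complex \<times> complex \<Rightarrow> real"
  assumes "linear L"
  obtains a b where "\<And>v. L v = Re (a * fst v + b * snd v)"
proof
  interpret L: linear L by fact
  fix v :: "complex \<times> complex"
  have "v = Re (fst v) *\<^sub>R (1, 0) + Im (fst v) *\<^sub>R (\<i>, 0) + Re (snd v) *\<^sub>R (0, 1) + Im (snd v) *\<^sub>R (0, \<i>)"
    by (simp add: complex_eq_iff prod_eq_iff)
  then have "L v = Re (fst v) * L (1, 0) + Im (fst v) * L (\<i>, 0) + Re (snd v) * L (0, 1) + Im (snd v) * L (0, \<i>)"
    by (metis L.add L.scale real_scaleR_def)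
  then show "L v = Re (Complex (L (1, 0)) (- L (\<i>, 0)) * fst v + Complex (L (0, 1)) (- L (0, \<i>)) * snd v)"
    by (simp add: algebra_simps)
qed

lemma nontrivial_root_of_unity:
  assumes "n \<ge> 2"
  obtains \<omega> :: complex where "\<omega> ^ n = 1" "\<omega> \<noteq> 1" "cmod \<omega> = 1"
proof
  define \<theta> where "\<theta> = 2 * pi / real n"
  show "cis \<theta> ^ n = 1"
    unfolding \<theta>_def Complex.DeMoivre using assms by simp
  show "cmod (cis \<theta>) = 1" by simp
  have "0 < \<theta>" "\<theta> \<le> pi"
    using assms by (auto simp: \<theta>_def field_simps)
  then have "cos \<theta> < cos 0"
    by (intro cos_monotone_0_pi) auto
  then show "cis \<theta> \<noteq> 1"
    by (metis cis.simps(1) cos_zero one_complex.sel(1) order_less_irrefl)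
qed

lemma unit_rotation_to_real:
  fixes z :: complex
  assumes "j > 0"
  obtains \<tau> where "cmod \<tau> = 1" "\<tau> ^ j * z = of_real (cmod z)"
proof
  define \<tau> where "\<tau> = cis (- Arg z / j)"
  show "cmod \<tau> = 1" by (simp add: \<tau>_def)
  have "\<tau> ^ j * z = cis (- Arg z) * z"
    unfolding \<tau>_def Complex.DeMoivre using assms by simp
  also have "\<dots> = of_real (cmod z) * (cis (- Arg z) * cis (Arg z))"
    by (metis rcis_cmod_Arg rcis_def mult.left_commute)
  also have "\<dots> = of_real (cmod z)"
    by (simp add: cis_mult)
  finally show "\<tau> ^ j * z = of_real (cmod z)" .
qed

lemma deriv_ident_mult_at_0:
  fixes g :: "complex \<Rightarrow> complex"
  assumes "g field_differentiable (at 0)"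
  shows "deriv (\<lambda>w. w * g w) 0 = g 0"
proof -
  have "DERIV g 0 :> deriv g 0"
    using assms by (simp add: DERIV_deriv_iff_field_differentiable)
  from DERIV_mult[OF DERIV_ident this] show ?thesis
    by (simp add: DERIV_imp_deriv)
qed

section \<open>Strict differentiability\<close>

definition has_strict_derivative_at ::
  "('a::real_normed_vector \<Rightarrow> 'b::real_normed_vector) \<Rightarrow> ('a \<Rightarrow> 'b) \<Rightarrow> 'a \<Rightarrow> bool" where
  "has_strict_derivative_at f L p \<longleftrightarrow>
     (\<forall>\<epsilon>>0. \<forall>\<^sub>F (x, y) in nhds p \<times>\<^sub>F nhds p. norm (f x - f y - L (x - y)) \<le> \<epsilon> * norm (x - y))"

lemma Ck_on_1_continuous_derivative:
  fixes f :: "'a::euclidean_space \<Rightarrow> 'b::real_normed_vector"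
  assumes "Ck_on 1 U f" "open U" "p \<in> U"
  shows "isCont (\<lambda>x. Blinfun (frechet_derivative f (at x))) p"
  unfolding isCont_def
proof (rule tendsto_componentwise1)
  fix j :: 'a
  have apply_eq: "blinfun_apply (Blinfun (frechet_derivative f (at x))) = frechet_derivative f (at x)"
    if "x \<in> U" for x
    using assms(1) that
    by (auto simp: frechet_derivative_works has_derivative_bounded_linear bounded_linear_Blinfun_apply)
  have "isCont (\<lambda>x. frechet_derivative f (at x) j) p"
    using assms by (simp add: continuous_on_eq_continuous_at)
  then have "((\<lambda>x. frechet_derivative f (at x) j) \<longlongrightarrow> frechet_derivative f (at p) j) (at p)"
    by (simp add: isCont_def)
  moreover have "\<forall>\<^sub>F x in at p. frechet_derivative f (at x) j = Blinfun (frechet_derivative f (at x)) j"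
    using eventually_at_in_open'[OF assms(2,3)] by eventually_elim (simp add: apply_eq)
  ultimately show "((\<lambda>x. Blinfun (frechet_derivative f (at x)) j) \<longlongrightarrow> Blinfun (frechet_derivative f (at p)) j) (at p)"
    using apply_eq[OF assms(3)] by (simp add: tendsto_cong)
qed

lemma has_derivative_linearization_on_ball:
  assumes "\<And>z. z \<in> ball p \<rho> \<Longrightarrow> (f has_derivative D z) (at z)"
    and "\<And>z. z \<in> ball p \<rho> \<Longrightarrow> onorm (D z - D p) \<le> \<epsilon>" and "x \<in> ball p \<rho>" "y \<in> ball p \<rho>"
  shows "norm (f x - f y - D p (x - y)) \<le> \<epsilon> * norm (x - y)"
proof -
  have "norm (f x - f y - D p (x - y)) \<le> norm (x - y) * \<epsilon>"
  proof (rule differentiable_bound_linearization[where S = "ball p \<rho>" and f' = D])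
    show "y + t *\<^sub>R (x - y) \<in> ball p \<rho>" if "t \<in> {0..1}" for t
    proof -
      have "(1 - t) *\<^sub>R y + t *\<^sub>R x \<in> ball p \<rho>"
        using that convex_ball[of p \<rho>] assms(3,4) unfolding convex_alt by auto
      then show ?thesis
        by (simp add: algebra_simps)
    qed
    show "(f has_derivative D z) (at z within ball p \<rho>)" if "z \<in> ball p \<rho>" for z
      using assms(1)[OF that] by (rule has_derivative_at_withinI)
    show "p \<in> ball p \<rho>"
      using assms(3) by (auto intro: le_less_trans[OF zero_le_dist])
  qed (use assms(2) in blast)
  then show ?thesis
    by (simp add: mult.commute)
qed

lemma Ck_on_1_has_strict_derivative_at:
  fixes f :: "'a::euclidean_space \<Rightarrow> 'b::real_normed_vector"
  assumes "Ck_on 1 U f" "open U" "p \<in> U"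
  shows "has_strict_derivative_at f (frechet_derivative f (at p)) p"
  unfolding has_strict_derivative_at_def
proof (intro allI impI)
  fix \<epsilon> :: real assume "\<epsilon> > 0"
  define D where "D x = frechet_derivative f (at x)" for x
  have D: "(f has_derivative D x) (at x)" if "x \<in> U" for x
    using assms(1) that by (simp add: D_def frechet_derivative_works)
  have "\<forall>\<^sub>F x in nhds p. x \<in> U \<and> dist (Blinfun (D x)) (Blinfun (D p)) < \<epsilon>"
    using eventually_nhds_in_open[OF assms(2,3)]
      Ck_on_1_continuous_derivative[OF assms, unfolded isCont_def, THEN tendstoD, OF \<open>\<epsilon> > 0\<close>]
    unfolding D_def eventually_at_filter by eventually_elim (use \<open>\<epsilon> > 0\<close> in auto)
  then obtain \<rho> where "\<rho> > 0" and \<rho>: "\<And>x. x \<in> ball p \<rho> \<Longrightarrow> x \<in> U \<and> dist (Blinfun (D x)) (Blinfun (D p)) < \<epsilon>"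
    by (auto simp: eventually_nhds_metric dist_commute)
  have "onorm (D x - D p) \<le> \<epsilon>" if "x \<in> ball p \<rho>" for x
  proof -
    have apply_eq: "blinfun_apply (Blinfun (D z)) = D z" if "z \<in> U" for z
      using D[OF that] by (simp add: bounded_linear_Blinfun_apply has_derivative_bounded_linear)
    have "onorm (D x - D p) = dist (Blinfun (D x)) (Blinfun (D p))"
      using apply_eq[of x] apply_eq[of p] \<rho>[OF that] assms(3)
      by (simp add: dist_norm norm_blinfun.rep_eq minus_blinfun.rep_eq fun_diff_def)
    then show ?thesis
      using \<rho>[OF that] by simp
  qed
  with has_derivative_linearization_on_ball[of p \<rho> f D \<epsilon>] D \<rho>
  have "\<forall>x\<in>ball p \<rho>. \<forall>y\<in>ball p \<rho>. norm (f x - f y - D p (x - y)) \<le> \<epsilon> * norm (x - y)"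
    by blast
  then show "\<forall>\<^sub>F (x, y) in nhds p \<times>\<^sub>F nhds p. norm (f x - f y - D p (x - y)) \<le> \<epsilon> * norm (x - y)"
    unfolding eventually_prod_same
    using eventually_nhds_ball[OF \<open>\<rho> > 0\<close>] by blast
qed

lemma has_strict_derivative_atD:
  assumes "has_strict_derivative_at f L p" "\<epsilon> > 0" "(g1 \<longlongrightarrow> p) F" "(g2 \<longlongrightarrow> p) F"
  shows "\<forall>\<^sub>F t in F. norm (f (g1 t) - f (g2 t) - L (g1 t - g2 t)) \<le> \<epsilon> * norm (g1 t - g2 t)"
  using assms(1,2) filterlim_Pair[OF assms(3,4)]
  unfolding has_strict_derivative_at_def by (auto dest: eventually_compose_filterlim)

lemma has_strict_derivative_at_flat_difference:
  fixes f :: "'a::real_normed_vector \<Rightarrow> real" and w :: "'c \<Rightarrow> real"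
  assumes "has_strict_derivative_at f L p" "\<epsilon> > 0" "(g1 \<longlongrightarrow> p) F" "(g2 \<longlongrightarrow> p) F"
    and "(\<lambda>t. f (g1 t)) \<in> O[F](w)" "(\<lambda>t. f (g2 t)) \<in> O[F](w)"
  shows "\<exists>K. \<forall>\<^sub>F t in F. \<bar>L (g1 t - g2 t)\<bar> \<le> \<epsilon> * norm (g1 t - g2 t) + K * \<bar>w t\<bar>"
proof -
  obtain c1 where c1: "\<forall>\<^sub>F t in F. norm (f (g1 t)) \<le> c1 * norm (w t)"
    using assms(5) by (rule landau_o.bigE)
  obtain c2 where c2: "\<forall>\<^sub>F t in F. norm (f (g2 t)) \<le> c2 * norm (w t)"
    using assms(6) by (rule landau_o.bigE)
  have "\<forall>\<^sub>F t in F. \<bar>L (g1 t - g2 t)\<bar> \<le> \<epsilon> * norm (g1 t - g2 t) + (c1 + c2) * \<bar>w t\<bar>"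
    using has_strict_derivative_atD[OF assms(1-4)] c1 c2
    by eventually_elim (auto simp: algebra_simps)
  then show ?thesis by blast
qed

lemma bigo_power_compose_at_0:
  fixes f :: "complex \<Rightarrow> real"
  assumes "f \<in> O[at 0](\<lambda>t. cmod t ^ N)" "f 0 = 0" "\<sigma> field_differentiable (at 0)" "\<sigma> 0 = 0"
  shows "(\<lambda>t. f (\<sigma> t)) \<in> O[at 0](\<lambda>t. cmod t ^ N)"
proof -
  obtain c where "c > 0" and c: "\<forall>\<^sub>F t in at 0. norm (f t) \<le> c * norm (cmod t ^ N)"
    using assms(1) by (rule landau_o.bigE)
  have "\<forall>\<^sub>F t in nhds 0. norm (f t) \<le> c * norm (cmod t ^ N)"
    using c unfolding eventually_at_filter by eventually_elim (use assms(2) \<open>c > 0\<close> in auto)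
  then have f_nhds: "f \<in> O[nhds 0](\<lambda>t. cmod t ^ N)"
    by (rule landau_o.bigI[OF \<open>c > 0\<close>])
  have "isCont \<sigma> 0"
    using assms(3) by (rule field_differentiable_imp_continuous_at)
  then have \<sigma>_lim: "filterlim \<sigma> (nhds 0) (at 0)"
    using assms(4) by (simp add: isCont_def)
  obtain D where "(\<sigma> has_field_derivative D) (at 0)"
    using assms(3) unfolding field_differentiable_def by blast
  then have "((\<lambda>t. \<sigma> t / t) \<longlongrightarrow> D) (at 0)"
    using assms(4) by (simp add: has_field_derivative_iff)
  then have "\<sigma> \<in> O[at 0](\<lambda>t. t)"
    by (rule bigoI_tendsto) (simp add: eventually_at_filter)
  then have "(\<lambda>t. cmod (\<sigma> t) ^ N) \<in> O[at 0](\<lambda>t. cmod t ^ N)"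
    by (intro landau_o.big_power) (simp only: landau_o.big.norm_iff)
  with landau_o.big.compose[OF f_nhds \<sigma>_lim] show ?thesis
    by (rule landau_o.big_trans)
qed

section \<open>Leading terms of holomorphic functions\<close>

lemma Re_dominated_imp_leading_coefficient_zero:
  fixes u :: "complex \<Rightarrow> complex"
  assumes "isCont u 0" "0 < n" "c < 1"
    and bound: "\<forall>\<^sub>F t in at 0. \<bar>Re (t ^ n * u t)\<bar> \<le> c * cmod (t ^ n * u t) + K * cmod t ^ (n + 1)"
  shows "u 0 = 0"
proof -
  \<comment> \<open>along the ray through \<tau> the leading term t ^ n * u 0 is a positive real\<close>
  obtain \<tau> where "cmod \<tau> = 1" and \<tau>: "\<tau> ^ n * u 0 = of_real (cmod (u 0))"
    using unit_rotation_to_real[OF \<open>0 < n\<close>] by blast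
  have ray: "((\<lambda>s::real. of_real s * \<tau>) \<longlongrightarrow> 0) (at_right 0)"
    by (auto intro!: tendsto_eq_intros)
  have "filterlim (\<lambda>s::real. of_real s * \<tau>) (at 0) (at_right 0)"
    unfolding filterlim_at using ray \<open>cmod \<tau> = 1\<close>
    by (auto simp: eventually_at_right_less eventually_at_right_field intro!: exI[of _ 1])
  from eventually_compose_filterlim[OF bound this]
  have "\<forall>\<^sub>F s in at_right 0. \<bar>Re (\<tau> ^ n * u (of_real s * \<tau>))\<bar> \<le> c * cmod (u (of_real s * \<tau>)) + K * s"
    using eventually_at_right_less[of 0]
  proof eventually_elim
    case (elim s)
    have "(of_real s * \<tau>) ^ n * u (of_real s * \<tau>) = s ^ n *\<^sub>R (\<tau> ^ n * u (of_real s * \<tau>))"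
      by (simp add: power_mult_distrib scaleR_conv_of_real)
    then have "\<bar>Re ((of_real s * \<tau>) ^ n * u (of_real s * \<tau>))\<bar> = s ^ n * \<bar>Re (\<tau> ^ n * u (of_real s * \<tau>))\<bar>"
        "cmod ((of_real s * \<tau>) ^ n * u (of_real s * \<tau>)) = s ^ n * cmod (u (of_real s * \<tau>))"
      using elim(2) \<open>cmod \<tau> = 1\<close> by (auto simp: norm_mult norm_power abs_mult)
    moreover have "cmod (of_real s * \<tau>) ^ (n + 1) = s ^ n * s"
      using elim(2) \<open>cmod \<tau> = 1\<close> by (simp add: norm_mult)
    ultimately have "s ^ n * \<bar>Re (\<tau> ^ n * u (of_real s * \<tau>))\<bar> \<le> s ^ n * (c * cmod (u (of_real s * \<tau>)) + K * s)"
      using elim(1) by (simp add: algebra_simps)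
    then show ?case
      using elim(2) by simp
  qed
  moreover have u_lim: "((\<lambda>s. u (of_real s * \<tau>)) \<longlongrightarrow> u 0) (at_right 0)"
    by (rule isCont_tendsto_compose[OF assms(1) ray])
  have "((\<lambda>s. \<bar>Re (\<tau> ^ n * u (of_real s * \<tau>))\<bar>) \<longlongrightarrow> \<bar>Re (\<tau> ^ n * u 0)\<bar>) (at_right 0)"
    by (intro tendsto_intros u_lim)
  moreover have "((\<lambda>s. c * cmod (u (of_real s * \<tau>)) + K * s) \<longlongrightarrow> c * cmod (u 0) + K * 0) (at_right 0)"
    by (intro tendsto_intros u_lim)
  ultimately have "\<bar>Re (\<tau> ^ n * u 0)\<bar> \<le> c * cmod (u 0) + K * 0"
    by (intro tendsto_le[OF trivial_limit_at_right_real])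
  then show ?thesis
    using \<tau> \<open>c < 1\<close> by (simp add: mult_le_cancel_right1)
qed

lemma holomorphic_Re_exceeds_fraction_of_norm:
  fixes \<delta> :: "complex \<Rightarrow> complex"
  assumes hol: "\<delta> holomorphic_on ball 0 e" and "0 < e" "\<delta> 0 = 0" and nonzero: "\<exists>\<^sub>F t in at 0. \<delta> t \<noteq> 0"
    and "c < 1"
  obtains N where "\<And>K. \<not> (\<forall>\<^sub>F t in at 0. \<bar>Re (\<delta> t)\<bar> \<le> c * cmod (\<delta> t) + K * cmod t ^ N)"
proof -
  have nonconst: "\<not> \<delta> constant_on ball 0 e"
  proof
    assume "\<delta> constant_on ball 0 e"
    then have "\<delta> t = 0" if "t \<in> ball 0 e" for t
      using that \<open>\<delta> 0 = 0\<close> \<open>0 < e\<close> unfolding constant_on_def by (metis centre_in_ball)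
    then have "\<forall>\<^sub>F t in at 0. \<delta> t = 0"
      using eventually_at_ball[OF \<open>0 < e\<close>, of 0 UNIV] by (auto elim: eventually_mono)
    with nonzero show False
      by (simp add: frequently_def)
  qed
  have "0 \<in> ball (0::complex) e" using \<open>0 < e\<close> by simp
  then obtain u r n where "0 < n" "0 < r" "ball (0::complex) r \<subseteq> ball 0 e" and u_hol: "u holomorphic_on ball 0 r"
    and factor: "\<And>w. w \<in> ball 0 r \<Longrightarrow> \<delta> w = (w - 0) ^ n * u w"
    and u_nz: "\<And>w. w \<in> ball 0 r \<Longrightarrow> u w \<noteq> 0"
    by (rule holomorphic_factor_zero_nonconstant[OF hol open_ball connected_ball _ \<open>\<delta> 0 = 0\<close> nonconst]) (rule that)
  have "isCont u 0"
    using holomorphic_on_imp_continuous_on[OF u_hol] \<open>0 < r\<close> by (simp add: continuous_on_eq_continuous_at)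
  show ?thesis
  proof (intro that notI)
    fix K assume "\<forall>\<^sub>F t in at 0. \<bar>Re (\<delta> t)\<bar> \<le> c * cmod (\<delta> t) + K * cmod t ^ (n + 1)"
    then have "\<forall>\<^sub>F t in at 0. \<bar>Re (t ^ n * u t)\<bar> \<le> c * cmod (t ^ n * u t) + K * cmod t ^ (n + 1)"
      using eventually_at_ball[OF \<open>0 < r\<close>] by eventually_elim (simp add: factor)
    then have "u 0 = 0"
      by (rule Re_dominated_imp_leading_coefficient_zero[OF \<open>isCont u 0\<close> \<open>0 < n\<close> \<open>c < 1\<close>])
    then show False
      using u_nz[of 0] \<open>0 < r\<close> by simp
  qed
qed

section \<open>Deck maps at critical zeros\<close>

lemma holomorphic_critical_zero_eq_power:
  fixes f :: "complex \<Rightarrow> complex"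
  assumes hol: "f holomorphic_on ball 0 e" and "f 0 = 0" "deriv f 0 = 0"
    and nonconst: "\<not> f constant_on ball 0 e"
  obtains n \<rho> k where "2 \<le> n" "0 < \<rho>" "\<rho> \<le> e" "k holomorphic_on ball 0 \<rho>" "k 0 = 0" "deriv k 0 \<noteq> 0"
    "\<And>w. w \<in> ball 0 \<rho> \<Longrightarrow> f w = k w ^ n"
proof -
  have "0 \<in> ball (0::complex) e"
    using nonconst by (cases "0 < e") (auto simp: constant_on_def ball_empty)
  then obtain g \<rho> n where "0 < n" "0 < \<rho>" and \<rho>e: "ball (0::complex) \<rho> \<subseteq> ball 0 e"
    and g_hol: "g holomorphic_on ball 0 \<rho>"
    and factor: "\<And>w. w \<in> ball 0 \<rho> \<Longrightarrow> f w = (w - 0) ^ n * g w"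
    and g_nz: "\<And>w. w \<in> ball 0 \<rho> \<Longrightarrow> g w \<noteq> 0"
    by (rule holomorphic_factor_zero_nonconstant[OF hol open_ball connected_ball _ \<open>f 0 = 0\<close> nonconst]) (rule that)
  have diff_at_0: "h field_differentiable (at 0)" if "h holomorphic_on ball 0 \<rho>" for h
    using holomorphic_on_imp_differentiable_at[OF that open_ball] \<open>0 < \<rho>\<close> by simp
  obtain lg where lg_hol: "lg holomorphic_on ball 0 \<rho>" and lg: "\<And>w. w \<in> ball 0 \<rho> \<Longrightarrow> g w = exp (lg w)"
    using contractible_imp_holomorphic_log[OF g_hol convex_imp_contractible[OF convex_ball] g_nz] by blast
  define k where "k w = w * exp (lg w / of_nat n)" for w
  have k_hol: "k holomorphic_on ball 0 \<rho>"
    unfolding k_def using lg_hol by (auto intro!: holomorphic_intros)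
  have "f w = k w ^ n" if "w \<in> ball 0 \<rho>" for w
  proof -
    have "exp (lg w / of_nat n) ^ n = g w"
      using \<open>0 < n\<close> lg[OF that] by (simp add: exp_of_nat_mult[symmetric])
    then show ?thesis
      using factor[OF that] by (simp add: k_def power_mult_distrib)
  qed
  moreover have "deriv k 0 \<noteq> 0"
    unfolding k_def using lg_hol by (simp add: deriv_ident_mult_at_0 diff_at_0 holomorphic_intros)
  moreover have "2 \<le> n"
  proof (rule ccontr)
    assume "\<not> 2 \<le> n"
    with \<open>0 < n\<close> have "n = 1" by simp
    have "\<forall>\<^sub>F w in nhds 0. f w = w * g w"
      using eventually_nhds_ball[OF \<open>0 < \<rho>\<close>, of 0] by eventually_elim (simp add: factor \<open>n = 1\<close>)
    then have "deriv f 0 = deriv (\<lambda>w. w * g w) 0"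
      by (rule deriv_cong_ev) simp
    also have "\<dots> = g 0"
      by (rule deriv_ident_mult_at_0[OF diff_at_0[OF g_hol]])
    finally show False
      using \<open>deriv f 0 = 0\<close> g_nz \<open>0 < \<rho>\<close> by simp
  qed
  moreover have "\<rho> \<le> e"
    using \<rho>e \<open>0 < \<rho>\<close> by (simp add: ball_subset_ball_iff)
  moreover have "k 0 = 0"
    by (simp add: k_def)
  ultimately show ?thesis
    using that \<open>0 < \<rho>\<close> k_hol by blast
qed

lemma holomorphic_conjugate_rotation:
  fixes k :: "complex \<Rightarrow> complex" and \<omega> :: complex
  assumes k_hol: "k holomorphic_on ball 0 \<rho>" and "0 < \<rho>" "k 0 = 0" "deriv k 0 \<noteq> 0" "cmod \<omega> = 1"
  obtains d \<sigma> where "0 < d" "d \<le> \<rho>" "inj_on k (ball 0 d)" "\<sigma> holomorphic_on ball 0 d" "\<sigma> 0 = 0"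
    "\<sigma> ` ball 0 d \<subseteq> ball 0 \<rho>" "\<And>t. t \<in> ball 0 d \<Longrightarrow> k (\<sigma> t) = \<omega> * k t"
proof -
  obtain r where "0 < r" and r\<rho>: "ball (0::complex) r \<subseteq> ball 0 \<rho>" and "open (k ` ball 0 r)" and inj: "inj_on k (ball 0 r)"
    by (rule has_complex_derivative_locally_invertible[OF k_hol _ open_ball \<open>deriv k 0 \<noteq> 0\<close>])
      (use \<open>0 < \<rho>\<close> in simp)
  have k_hol_r: "k holomorphic_on ball 0 r"
    using k_hol r\<rho> by (rule holomorphic_on_subset)
  obtain kinv where kinv_hol: "kinv holomorphic_on k ` ball 0 r" and kinv: "\<And>z. z \<in> ball 0 r \<Longrightarrow> kinv (k z) = z"
    by (rule holomorphic_has_inverse[OF k_hol_r open_ball inj]) blast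
  have "0 \<in> k ` ball 0 r"
    using \<open>k 0 = 0\<close> \<open>0 < r\<close> by (metis centre_in_ball image_eqI)
  then obtain s where "0 < s" and s: "ball 0 s \<subseteq> k ` ball 0 r"
    using \<open>open (k ` ball 0 r)\<close> open_contains_ball by blast
  have "isCont k 0"
    using holomorphic_on_imp_continuous_on[OF k_hol_r] \<open>0 < r\<close> by (simp add: continuous_on_eq_continuous_at)
  then obtain d0 where "0 < d0" and d0: "k ` ball 0 d0 \<subseteq> ball 0 s"
    using continuous_at_ball \<open>0 < s\<close> \<open>k 0 = 0\<close> by metis
  define d where "d = min d0 r"
  define \<sigma> where "\<sigma> t = kinv (\<omega> * k t)" for t
  have rotated: "\<omega> * k t \<in> k ` ball 0 r" if "t \<in> ball 0 d" for t
  proof -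
    have "t \<in> ball 0 d0"
      using that by (simp add: d_def)
    then have "k t \<in> ball 0 s"
      using d0 by blast
    then have "\<omega> * k t \<in> ball 0 s"
      using \<open>cmod \<omega> = 1\<close> by (simp add: norm_mult)
    then show ?thesis
      using s by blast
  qed
  have \<sigma>: "\<sigma> t \<in> ball 0 r \<and> k (\<sigma> t) = \<omega> * k t" if "t \<in> ball 0 d" for t
    using rotated[OF that] kinv by (auto simp: \<sigma>_def)
  show ?thesis
  proof
    show "0 < d" "d \<le> \<rho>"
      using \<open>0 < d0\<close> \<open>0 < r\<close> r\<rho> by (auto simp: d_def ball_subset_ball_iff)
    show "inj_on k (ball 0 d)"
      using inj by (rule inj_on_subset) (simp add: d_def subset_ball)
    have "k holomorphic_on ball 0 d"
      using k_hol_r by (rule holomorphic_on_subset) (simp add: d_def subset_ball)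
    then have "(kinv \<circ> (\<lambda>t. \<omega> * k t)) holomorphic_on ball 0 d"
      using rotated by (intro holomorphic_on_compose_gen[OF _ kinv_hol] holomorphic_intros) auto
    then show "\<sigma> holomorphic_on ball 0 d"
      by (simp add: \<sigma>_def[abs_def] comp_def)
    show "\<sigma> 0 = 0"
      using kinv[of 0] \<open>k 0 = 0\<close> \<open>0 < r\<close> by (simp add: \<sigma>_def)
    show "\<sigma> ` ball 0 d \<subseteq> ball 0 \<rho>" "\<And>t. t \<in> ball 0 d \<Longrightarrow> k (\<sigma> t) = \<omega> * k t"
      using \<sigma> r\<rho> by auto
  qed
qed

lemma holomorphic_deck_map_at_critical_zero:
  fixes f :: "complex \<Rightarrow> complex"
  assumes hol: "f holomorphic_on ball 0 e" and "0 < e" "f 0 = 0" "deriv f 0 = 0"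
  obtains d \<sigma> where "0 < d" "d \<le> e" "\<sigma> holomorphic_on ball 0 d" "\<sigma> 0 = 0" "\<sigma> ` ball 0 d \<subseteq> ball 0 e"
    "\<And>t. t \<in> ball 0 d \<Longrightarrow> f (\<sigma> t) = f t" "\<And>t. t \<in> ball 0 d \<Longrightarrow> \<sigma> t = t \<Longrightarrow> t = 0"
proof (cases "f constant_on ball 0 e")
  case True
  then have "f t = 0" if "t \<in> ball 0 e" for t
    using that \<open>f 0 = 0\<close> \<open>0 < e\<close> unfolding constant_on_def by (metis centre_in_ball)
  then show ?thesis
    by (intro that[of e uminus]) (auto simp: \<open>0 < e\<close> holomorphic_intros)
next
  case False
  obtain n \<rho> k where "2 \<le> n" "0 < \<rho>" "\<rho> \<le> e" and k_hol: "k holomorphic_on ball 0 \<rho>" and "k 0 = 0"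
    and "deriv k 0 \<noteq> 0" and f_eq: "\<And>w. w \<in> ball 0 \<rho> \<Longrightarrow> f w = k w ^ n"
    using holomorphic_critical_zero_eq_power[OF hol \<open>f 0 = 0\<close> \<open>deriv f 0 = 0\<close> False] by blast
  obtain \<omega> where "\<omega> ^ n = 1" "\<omega> \<noteq> 1" "cmod \<omega> = 1"
    using nontrivial_root_of_unity[OF \<open>2 \<le> n\<close>] by blast
  obtain d \<sigma> where "0 < d" "d \<le> \<rho>" and inj: "inj_on k (ball 0 d)" and "\<sigma> holomorphic_on ball 0 d" "\<sigma> 0 = 0"
    and \<sigma>_into: "\<sigma> ` ball 0 d \<subseteq> ball 0 \<rho>" and k\<sigma>: "\<And>t. t \<in> ball 0 d \<Longrightarrow> k (\<sigma> t) = \<omega> * k t"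
    using holomorphic_conjugate_rotation[OF k_hol \<open>0 < \<rho>\<close> \<open>k 0 = 0\<close> \<open>deriv k 0 \<noteq> 0\<close> \<open>cmod \<omega> = 1\<close>] by blast
  show ?thesis
  proof
    show "0 < d" "d \<le> e" "\<sigma> holomorphic_on ball 0 d" "\<sigma> 0 = 0"
      using \<open>0 < d\<close> \<open>d \<le> \<rho>\<close> \<open>\<rho> \<le> e\<close> \<open>\<sigma> holomorphic_on ball 0 d\<close> \<open>\<sigma> 0 = 0\<close> by auto
    show "\<sigma> ` ball 0 d \<subseteq> ball 0 e"
      using \<sigma>_into \<open>\<rho> \<le> e\<close> by auto
    fix t :: complex assume t: "t \<in> ball 0 d"
    then have "t \<in> ball 0 \<rho>" "\<sigma> t \<in> ball 0 \<rho>"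
      using \<open>d \<le> \<rho>\<close> \<sigma>_into by (simp, blast)
    then show "f (\<sigma> t) = f t"
      using f_eq k\<sigma>[OF t] \<open>\<omega> ^ n = 1\<close> by (simp add: power_mult_distrib)
    assume "\<sigma> t = t"
    then have "(1 - \<omega>) * k t = 0"
      using k\<sigma>[OF t] by (simp add: algebra_simps)
    then have "k t = k 0"
      using \<open>\<omega> \<noteq> 1\<close> \<open>k 0 = 0\<close> by simp
    then show "t = 0"
      using inj t \<open>0 < d\<close> by (auto simp: inj_on_def)
  qed
qed

section \<open>Holomorphic curves tangent to infinite order\<close>

lemma tangent_infinite_order_reparametrization_bound:
  assumes f: "has_strict_derivative_at f L p" "f p = 0" and "tangent_infinite_order f \<gamma>"
    and \<gamma>: "isCont \<gamma> 0" "\<gamma> 0 = p" and \<sigma>: "\<sigma> field_differentiable (at 0)" "\<sigma> 0 = 0" and "\<epsilon> > 0"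
  shows "\<exists>K. \<forall>\<^sub>F t in at 0. \<bar>L (\<gamma> t - \<gamma> (\<sigma> t))\<bar> \<le> \<epsilon> * norm (\<gamma> t - \<gamma> (\<sigma> t)) + K * cmod t ^ N"
proof -
  have \<gamma>_lim: "(\<gamma> \<longlongrightarrow> p) (at 0)"
    using \<gamma> by (simp add: isCont_def)
  have "isCont \<sigma> 0"
    using \<sigma>(1) by (rule field_differentiable_imp_continuous_at)
  then have "((\<lambda>t. \<gamma> (\<sigma> t)) \<longlongrightarrow> p) (at 0)"
    using isCont_tendsto_compose[OF \<gamma>(1)] \<gamma>(2) \<sigma>(2) by (simp add: isCont_def)
  moreover have "(\<lambda>t. f (\<gamma> t)) \<in> O[at 0](\<lambda>t. cmod t ^ N)"
    using \<open>tangent_infinite_order f \<gamma>\<close> by (simp add: tangent_infinite_order_def)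
  moreover have "(\<lambda>t. f (\<gamma> (\<sigma> t))) \<in> O[at 0](\<lambda>t. cmod t ^ N)"
    using bigo_power_compose_at_0[OF calculation(2) _ \<sigma>] f(2) \<gamma>(2) by simp
  ultimately obtain K where
      "\<forall>\<^sub>F t in at 0. \<bar>L (\<gamma> t - \<gamma> (\<sigma> t))\<bar> \<le> \<epsilon> * norm (\<gamma> t - \<gamma> (\<sigma> t)) + K * \<bar>cmod t ^ N\<bar>"
    using has_strict_derivative_at_flat_difference[OF f(1) \<open>\<epsilon> > 0\<close> \<gamma>_lim] by blast
  then show ?thesis
    by (intro exI[of _ K]) simp
qed

lemma holomorphic_pair_compose:
  fixes \<gamma> :: "complex \<Rightarrow> complex \<times> complex"
  assumes "(\<lambda>t. fst (\<gamma> t)) holomorphic_on A" "(\<lambda>t. snd (\<gamma> t)) holomorphic_on A"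
    and "\<sigma> holomorphic_on B" "\<sigma> ` B \<subseteq> A"
  shows "(\<lambda>t. fst (\<gamma> (\<sigma> t))) holomorphic_on B" "(\<lambda>t. snd (\<gamma> (\<sigma> t))) holomorphic_on B"
  using holomorphic_on_compose_gen[OF assms(3) assms(1) assms(4)]
    holomorphic_on_compose_gen[OF assms(3) assms(2) assms(4)] by (simp_all add: comp_def)

lemma not_tangent_infinite_order_of_normal_reparametrization:
  fixes f :: "complex \<times> complex \<Rightarrow> real" and \<gamma> :: "complex \<Rightarrow> complex \<times> complex"
  assumes f: "has_strict_derivative_at f (\<lambda>v. Re (a * fst v + b * snd v)) p" "f p = 0" "a \<noteq> 0 \<or> b \<noteq> 0"
    and \<gamma>: "(\<lambda>t. fst (\<gamma> t)) holomorphic_on ball 0 e" "(\<lambda>t. snd (\<gamma> t)) holomorphic_on ball 0 e"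
      "\<gamma> 0 = p" "inj_on \<gamma> (ball 0 e)"
    and \<sigma>: "\<sigma> holomorphic_on ball 0 d" "0 < d" "d \<le> e" "\<sigma> 0 = 0" "\<sigma> ` ball 0 d \<subseteq> ball 0 e"
      "\<And>t. t \<in> ball 0 d \<Longrightarrow> \<sigma> t = t \<Longrightarrow> t = 0"
    and normal: "\<And>t. t \<in> ball 0 d \<Longrightarrow> cnj b * fst (\<gamma> t - \<gamma> (\<sigma> t)) = cnj a * snd (\<gamma> t - \<gamma> (\<sigma> t))"
  shows "\<not> tangent_infinite_order f \<gamma>"
proof
  assume tangent: "tangent_infinite_order f \<gamma>"
  define \<delta> where "\<delta> t = a * fst (\<gamma> t - \<gamma> (\<sigma> t)) + b * snd (\<gamma> t - \<gamma> (\<sigma> t))" for t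
  define S where "S = sqrt ((cmod a)\<^sup>2 + (cmod b)\<^sup>2)"
  have "S > 0"
    using f(3) by (auto simp: S_def add_pos_nonneg add_nonneg_pos)
  have norm_eq: "S * norm (\<gamma> t - \<gamma> (\<sigma> t)) = cmod (\<delta> t)" if "t \<in> ball 0 d" for t
    using norm_Pair_cnj_proportional[OF normal[OF that]] unfolding prod.collapse S_def \<delta>_def .
  have de: "ball 0 d \<subseteq> ball 0 e"
    using \<open>d \<le> e\<close> by (rule subset_ball)
  have "\<delta> holomorphic_on ball 0 d"
    unfolding \<delta>_def using holomorphic_pair_compose[OF \<gamma>(1,2) \<sigma>(1,5)]
      holomorphic_on_subset[OF \<gamma>(1) de] holomorphic_on_subset[OF \<gamma>(2) de]
    by (auto intro!: holomorphic_intros)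
  moreover have "\<delta> 0 = 0"
    using \<sigma>(4) by (simp add: \<delta>_def)
  moreover have "\<forall>\<^sub>F t in at 0. \<delta> t \<noteq> 0"
    using eventually_at_ball'[OF \<open>0 < d\<close>, of 0 UNIV]
  proof eventually_elim
    case (elim t)
    then have "t \<in> ball 0 e" "\<sigma> t \<in> ball 0 e" "\<sigma> t \<noteq> t"
      using de \<sigma>(5,6) by blast+
    then have "\<gamma> t \<noteq> \<gamma> (\<sigma> t)"
      using \<gamma>(4) by (metis inj_on_def)
    then show ?case
      using norm_eq[of t] elim \<open>S > 0\<close> by auto
  qed
  ultimately obtain N where N: "\<And>K. \<not> (\<forall>\<^sub>F t in at 0. \<bar>Re (\<delta> t)\<bar> \<le> 1/2 * cmod (\<delta> t) + K * cmod t ^ N)"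
    using holomorphic_Re_exceeds_fraction_of_norm[of \<delta> d "1/2"] \<open>0 < d\<close> eventually_frequently by force
  have \<gamma>_cont: "isCont \<gamma> 0"
    using continuous_on_Pair[OF holomorphic_on_imp_continuous_on[OF \<gamma>(1)] holomorphic_on_imp_continuous_on[OF \<gamma>(2)]]
      \<open>0 < d\<close> \<open>d \<le> e\<close> by (simp add: continuous_on_eq_continuous_at)
  have \<sigma>_diff: "\<sigma> field_differentiable (at 0)"
    using holomorphic_on_imp_differentiable_at[OF \<sigma>(1) open_ball] \<open>0 < d\<close> by simp
  obtain K where "\<forall>\<^sub>F t in at 0. \<bar>Re (\<delta> t)\<bar> \<le> S / 2 * norm (\<gamma> t - \<gamma> (\<sigma> t)) + K * cmod t ^ N"
    using tangent_infinite_order_reparametrization_bound[OF f(1,2) tangent \<gamma>_cont \<gamma>(3) \<sigma>_diff \<sigma>(4), of "S / 2" N]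
      \<open>S > 0\<close> by (auto simp: \<delta>_def)
  then have "\<forall>\<^sub>F t in at 0. \<bar>Re (\<delta> t)\<bar> \<le> 1/2 * cmod (\<delta> t) + K * cmod t ^ N"
    using eventually_at_ball[OF \<open>0 < d\<close>, of 0 UNIV] by eventually_elim (simp add: norm_eq[symmetric])
  with N show False
    by blast
qed

lemma tangent_infinite_order_imp_regular:
  fixes f :: "complex \<times> complex \<Rightarrow> real" and \<gamma> :: "complex \<Rightarrow> complex \<times> complex"
  assumes f: "has_strict_derivative_at f L p" "linear L" "L \<noteq> (\<lambda>v. 0)" "f p = 0"
    and \<gamma>: "(\<lambda>t. fst (\<gamma> t)) holomorphic_on ball 0 e" "(\<lambda>t. snd (\<gamma> t)) holomorphic_on ball 0 e"
      "0 < e" "\<gamma> 0 = p" "inj_on \<gamma> (ball 0 e)"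
    and tangent: "tangent_infinite_order f \<gamma>"
  shows "deriv (\<lambda>t. fst (\<gamma> t - p)) 0 \<noteq> 0 \<or> deriv (\<lambda>t. snd (\<gamma> t - p)) 0 \<noteq> 0"
proof (rule ccontr)
  have hol: "(\<lambda>t. fst (\<gamma> t - p)) holomorphic_on ball 0 e" "(\<lambda>t. snd (\<gamma> t - p)) holomorphic_on ball 0 e"
    using \<gamma>(1,2) by (auto intro!: holomorphic_intros)
  assume "\<not> ?thesis"
  then have dA: "DERIV (\<lambda>t. fst (\<gamma> t - p)) 0 :> 0" and dB: "DERIV (\<lambda>t. snd (\<gamma> t - p)) 0 :> 0"
    using holomorphic_derivI[OF hol(1) open_ball, of 0 UNIV] holomorphic_derivI[OF hol(2) open_ball, of 0 UNIV] \<gamma>(3)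
    by simp_all
  obtain a b where L: "\<And>v. L v = Re (a * fst v + b * snd v)"
    using linear_complex_pair_to_real[OF f(2)] by blast
  have "a \<noteq> 0 \<or> b \<noteq> 0"
    using f(3) L by auto
  define F where "F t = cnj b * fst (\<gamma> t - p) - cnj a * snd (\<gamma> t - p)" for t
  have "F holomorphic_on ball 0 e"
    unfolding F_def using hol by (auto intro!: holomorphic_intros)
  moreover have "F 0 = 0"
    using \<gamma>(4) by (simp add: F_def)
  moreover have "DERIV F 0 :> cnj b * 0 - cnj a * 0"
    unfolding F_def by (intro DERIV_diff DERIV_cmult dA dB)
  then have "deriv F 0 = 0"
    by (simp add: DERIV_imp_deriv)
  ultimately obtain d \<sigma> where \<sigma>: "0 < d" "d \<le> e" "\<sigma> holomorphic_on ball 0 d" "\<sigma> 0 = 0" "\<sigma> ` ball 0 d \<subseteq> ball 0 e"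
    "\<And>t. t \<in> ball 0 d \<Longrightarrow> F (\<sigma> t) = F t" "\<And>t. t \<in> ball 0 d \<Longrightarrow> \<sigma> t = t \<Longrightarrow> t = 0"
    by (rule holomorphic_deck_map_at_critical_zero[OF _ \<gamma>(3)]) (rule that)
  have normal: "cnj b * fst (\<gamma> t - \<gamma> (\<sigma> t)) = cnj a * snd (\<gamma> t - \<gamma> (\<sigma> t))" if "t \<in> ball 0 d" for t
    using \<sigma>(6)[OF that] by (simp add: F_def algebra_simps)
  have "L = (\<lambda>v. Re (a * fst v + b * snd v))"
    using L by blast
  from not_tangent_infinite_order_of_normal_reparametrization[OF f(1)[unfolded this] f(4) \<open>a \<noteq> 0 \<or> b \<noteq> 0\<close>
      \<gamma>(1,2,4,5) \<sigma>(3,1,2,4,5,7) normal]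
  show False
    using tangent by contradiction
qed

lemma vanishing_order_eq_1I:
  assumes "h 0 = 0" "deriv (\<lambda>t. fst (h t)) 0 \<noteq> 0 \<or> deriv (\<lambda>t. snd (h t)) 0 \<noteq> 0"
  shows "vanishing_order h = 1"
  unfolding vanishing_order_def
proof (rule Least_equality)
  show "(deriv ^^ 1) (\<lambda>t. fst (h t)) 0 \<noteq> 0 \<or> (deriv ^^ 1) (\<lambda>t. snd (h t)) 0 \<noteq> 0"
    using assms(2) by simp
  show "1 \<le> n" if "(deriv ^^ n) (\<lambda>t. fst (h t)) 0 \<noteq> 0 \<or> (deriv ^^ n) (\<lambda>t. snd (h t)) 0 \<noteq> 0" for n
    using that assms(1) by (cases n) auto
qed

lemma local_defining_function_strict_derivative:
  assumes "local_defining_function M p U r" "p \<in> M"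
  shows "has_strict_derivative_at r (frechet_derivative r (at p)) p"
    "linear (frechet_derivative r (at p))" "frechet_derivative r (at p) \<noteq> (\<lambda>v. 0)" "r p = 0"
proof -
  have "Ck_on 1 U r" "open U" "p \<in> U"
    using assms(1) by (auto simp: local_defining_function_def smooth_on_def)
  then show "has_strict_derivative_at r (frechet_derivative r (at p)) p"
    by (rule Ck_on_1_has_strict_derivative_at)
  have "(r has_derivative frechet_derivative r (at p)) (at p)"
    using \<open>Ck_on 1 U r\<close> \<open>p \<in> U\<close> by (auto simp: frechet_derivative_works)
  then show "linear (frechet_derivative r (at p))"
    by (rule has_derivative_linear)
  show "frechet_derivative r (at p) \<noteq> (\<lambda>v. 0)" "r p = 0"
    using assms \<open>p \<in> U\<close> unfolding local_defining_function_def by blast+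
qed

theorem lemma5p2:
  fixes M :: "(complex \<times> complex) set" and p :: "complex \<times> complex"
    and U :: "(complex \<times> complex) set" and r :: "complex \<times> complex \<Rightarrow> real"
    and \<gamma> :: "complex \<Rightarrow> complex \<times> complex"
  assumes "smooth_real_hypersurface M" and "p \<in> M"
    and "local_defining_function M p U r"
    and "in_Gamma p \<gamma>"
    and "tangent_infinite_order r \<gamma>"
  shows "in_Gamma_reg p \<gamma>"
proof -
  \<comment> \<open>only the defining function at p is needed, not the global hypothesis on M\<close>
  obtain e where "0 < e" and \<gamma>: "(\<lambda>t. fst (\<gamma> t)) holomorphic_on ball 0 e" "(\<lambda>t. snd (\<gamma> t)) holomorphic_on ball 0 e"
    "\<gamma> 0 = p" "inj_on \<gamma> (ball 0 e)"
    using \<open>in_Gamma p \<gamma>\<close> unfolding in_Gamma_def by blast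
  have "deriv (\<lambda>t. fst (\<gamma> t - p)) 0 \<noteq> 0 \<or> deriv (\<lambda>t. snd (\<gamma> t - p)) 0 \<noteq> 0"
    using tangent_infinite_order_imp_regular[OF local_defining_function_strict_derivative[OF assms(3,2)]
        \<gamma>(1,2) \<open>0 < e\<close> \<gamma>(3,4) assms(5)] .
  then have "vanishing_order (\<lambda>t. \<gamma> t - p) = 1"
    using \<gamma>(3) by (intro vanishing_order_eq_1I) simp_all
  then show ?thesis
    using \<open>in_Gamma p \<gamma>\<close> by (simp add: in_Gamma_reg_def)
qed

end
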